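(* Consider a systematic $(\bar n,\bar k,\bar m)$ Strongly-MDS convolutional code, and suppose the sub-symbols of $\mathbf{x}[i]=(s_0[i],\dots,s_{\bar k-1}[i],p_0[i],\dots,p_{\bar n-\bar k-1}[i])$ are transmitted one per channel use, in this order, in the time interval $[i\bar n,(i+1)\bar n-1]$, for $i=0,1,\dots$. Then for each $j=0,1,\dots,\bar m$: (L1) if at most $\hat N\le(\bar n-\bar k)(j+1)$ transmitted sub-symbols are erased in the interval $[0,(j+1)\bar n-1]$, then $\mathbf{s}[0]=(s_0[0],\dots,s_{\bar k-1}[0])$ can be recovered by time $(j+1)\bar n-1$; (L2) if the channel introduces an erasure burst of $\hat B$ sub-symbols in the interval $[c,c+\hat B-1]$ with $\hat B\le(\bar n-\bar k)(j+1)$ and $0\le c\le\bar k-1$, then all erased source symbols are recovered by time $(j+1)\bar n-1$; (L3) if the channel introduces an erasure burst of $\hat B$ sub-symbols in the interval $[c,c+\hat B-1]$ with $0\le c\le\bar k-1$, followed by at most $\hat I$ isolated erasures, with $\hat B+\hat I\le(\bar n-\bar k)(j+1)$, then all erased symbols in the burst are recovered by time $(j+1)\bar n-1$.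
   Context: An $(\bar n,\bar k,\bar m)$ convolutional code over $\mathbb{F}_q$ maps source symbols $\mathbf{s}[i]\in\mathbb{F}_q^{\bar k}$ ($i\ge0$; $\mathbf{s}[i]=0$ for $i<0$) to $\mathbf{x}[i]=\big(\sum_{t=0}^{\bar m}\mathbf{s}^\dagger[i-t]\mathbf{G}_t\big)^\dagger\in\mathbb{F}_q^{\bar n}$ with $\mathbf{G}_t\in\mathbb{F}_q^{\bar k\times\bar n}$. It is systematic if $\mathbf{G}_0=[\mathbf{I}_{\bar k}\ \mathbf{H}_0]$ and $\mathbf{G}_t=[\mathbf{0}_{\bar k\times\bar k}\ \mathbf{H}_t]$ for $t\ge1$, so $\mathbf{x}[i]=(\mathbf{s}[i],\mathbf{p}[i])$ with $\mathbf{p}[i]=(\sum_{t=0}^{\bar m}\mathbf{s}^\dagger[i-t]\mathbf{H}_t)^\dagger\in\mathbb{F}_q^{\bar n-\bar k}$. Its $j$-th sub-symbol column distance is $d_j^c=\min\{\mathrm{wt}^c(\mathbf{x}[0],\dots,\mathbf{x}[j]) : \mathbf{s}[0]\neq0\}$, where $\mathrm{wt}^c$ counts nonzero entries (sub-symbols) in $\mathbb{F}_q$. A systematic Strongly-MDS code is a systematic $(\bar n,\bar k,\bar m)$ convolutional code with $d_j^c=(\bar n-\bar k)(j+1)+1$ for all $j=0,1,\dots,\bar m$. *)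

theory Defs
  imports Main
begin

text \<open>A systematic (n,k,m) convolutional code over a field is given by the parity
  matrices H t (t = 0..m), each a k x (n-k) matrix, represented as
  H t a b  (row a < k, column b < n - k).  A source sequence is
  s :: nat => nat => 'a, with s i a the a-th sub-symbol (a < k) of s[i];
  s[i] = 0 for i < 0 is built in by summing only over t <= i.\<close>

definition parity ::
  "nat \<Rightarrow> nat \<Rightarrow> (nat \<Rightarrow> nat \<Rightarrow> nat \<Rightarrow> 'a::field) \<Rightarrow> (nat \<Rightarrow> nat \<Rightarrow> 'a) \<Rightarrow> nat \<Rightarrow> nat \<Rightarrow> 'a"
  where "parity k m H s i b = (\<Sum>t\<in>{0..min m i}. \<Sum>a<k. s (i - t) a * H t a b)"

definition codeword ::
  "nat \<Rightarrow> nat \<Rightarrow> (nat \<Rightarrow> nat \<Rightarrow> nat \<Rightarrow> 'a::field) \<Rightarrow> (nat \<Rightarrow> nat \<Rightarrow> 'a) \<Rightarrow> nat \<Rightarrow> nat \<Rightarrow> 'a"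
  where "codeword k m H s i l = (if l < k then s i l else parity k m H s i (l - k))"

definition subsym ::
  "nat \<Rightarrow> nat \<Rightarrow> nat \<Rightarrow> (nat \<Rightarrow> nat \<Rightarrow> nat \<Rightarrow> 'a::field) \<Rightarrow> (nat \<Rightarrow> nat \<Rightarrow> 'a) \<Rightarrow> nat \<Rightarrow> 'a"
  where "subsym n k m H s \<tau> = codeword k m H s (\<tau> div n) (\<tau> mod n)"

definition col_weight ::
  "nat \<Rightarrow> nat \<Rightarrow> nat \<Rightarrow> (nat \<Rightarrow> nat \<Rightarrow> nat \<Rightarrow> 'a::field) \<Rightarrow> (nat \<Rightarrow> nat \<Rightarrow> 'a) \<Rightarrow> nat \<Rightarrow> nat"
  where "col_weight n k m H s j = card {l. l < (j + 1) * n \<and> codeword k m H s (l div n) (l mod n) \<noteq> 0}"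

definition col_dist ::
  "nat \<Rightarrow> nat \<Rightarrow> nat \<Rightarrow> (nat \<Rightarrow> nat \<Rightarrow> nat \<Rightarrow> 'a::field) \<Rightarrow> nat \<Rightarrow> nat"
  where "col_dist n k m H j = Inf {col_weight n k m H s j | s. \<exists>a<k. s 0 a \<noteq> 0}"

definition strongly_MDS ::
  "nat \<Rightarrow> nat \<Rightarrow> nat \<Rightarrow> (nat \<Rightarrow> nat \<Rightarrow> nat \<Rightarrow> 'a::field) \<Rightarrow> bool"
  where "strongly_MDS n k m H \<longleftrightarrow> (\<forall>j\<le>m. col_dist n k m H j = (n - k) * (j + 1) + 1)"

text \<open>With erased channel uses E, the source sub-symbols s i a, (i,a) in Q, can be
  recovered by time T - 1: any two source sequences whose transmitted sub-symbols
  agree on all non-erased channel uses tau < T agree on Q.\<close>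
definition recoverable ::
  "nat \<Rightarrow> nat \<Rightarrow> nat \<Rightarrow> (nat \<Rightarrow> nat \<Rightarrow> nat \<Rightarrow> 'a::field) \<Rightarrow> nat set \<Rightarrow> nat \<Rightarrow> (nat \<times> nat) set \<Rightarrow> bool"
  where "recoverable n k m H E T Q \<longleftrightarrow>
    (\<forall>s s'. (\<forall>\<tau><T. \<tau> \<notin> E \<longrightarrow> subsym n k m H s \<tau> = subsym n k m H s' \<tau>)
        \<longrightarrow> (\<forall>(i, a)\<in>Q. s i a = s' i a))"

definition erased_src :: "nat \<Rightarrow> nat \<Rightarrow> nat set \<Rightarrow> (nat \<times> nat) set"
  where "erased_src n k A = {(\<tau> div n, \<tau> mod n) | \<tau>. \<tau> \<in> A \<and> \<tau> mod n < k}"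

definition isolated_in :: "nat set \<Rightarrow> nat set \<Rightarrow> bool"
  where "isolated_in J E \<longleftrightarrow> (\<forall>\<tau>\<in>J. Suc \<tau> \<notin> E \<and> (\<forall>\<sigma>\<in>E. Suc \<sigma> \<noteq> \<tau>))"

end

theory Submission
  imports Defs
begin

text \<open>The code is linear and time invariant, so two source sequences that agree on the
  received sub-symbols differ by a sequence d whose received sub-symbols vanish. Decode
  block by block: if d vanishes on blocks before i but not on block i, then d shifted by
  i blocks is a code sequence with nonzero first block, so by the column distance its
  weight over blocks i..j exceeds (n-k)(j+1-i); but that weight is at most the number of
  erasures in the window.\<close>

lemma subsym_diff:
  "subsym n k m H (\<lambda>i a. s i a - s' i a) \<tau> = subsym n k m H s \<tau> - subsym n k m H s' \<tau>"
  unfolding subsym_def codeword_def parity_def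
  by (simp add: sum_subtractf left_diff_distrib)

lemma parity_shift:
  assumes "\<forall>u<i. \<forall>a<k. d u a = 0"
  shows "parity k m H (\<lambda>t a. d (t + i) a) t b = parity k m H d (t + i) b"
  unfolding parity_def
proof (rule sum.mono_neutral_cong_left)
  show "\<forall>x\<in>{0..min m (t + i)} - {0..min m t}. (\<Sum>a<k. d (t + i - x) a * H x a b) = 0"
    using assms by auto
  show "(\<Sum>a<k. d (t - x + i) a * H x a b) = (\<Sum>a<k. d (t + i - x) a * H x a b)"
    if "x \<in> {0..min m t}" for x
    using that by (simp add: Nat.add_diff_assoc2)
qed auto

lemma codeword_shift:
  assumes "\<forall>u<i. \<forall>a<k. d u a = 0"
  shows "codeword k m H (\<lambda>t a. d (t + i) a) t l = codeword k m H d (t + i) l"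
  unfolding codeword_def using parity_shift[OF assms] by simp

lemma col_weight_shift:
  assumes "0 < n" and "\<forall>u<i. \<forall>a<k. d u a = 0"
  shows "col_weight n k m H (\<lambda>t a. d (t + i) a) j
    = card {\<tau>\<in>{i * n..<(i + j + 1) * n}. subsym n k m H d \<tau> \<noteq> 0}"
proof -
  have "codeword k m H (\<lambda>t a. d (t + i) a) (l div n) (l mod n) = subsym n k m H d (l + i * n)"
    for l using assms by (simp add: codeword_shift subsym_def add.commute)
  then have "col_weight n k m H (\<lambda>t a. d (t + i) a) j
      = card {l. l < (j + 1) * n \<and> subsym n k m H d (l + i * n) \<noteq> 0}"
    unfolding col_weight_def by simp
  also have "\<dots> = card ((\<lambda>l. l + i * n) ` {l. l < (j + 1) * n \<and> subsym n k m H d (l + i * n) \<noteq> 0})"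
    by (simp add: card_image inj_on_def)
  also have "(\<lambda>l. l + i * n) ` {l. l < (j + 1) * n \<and> subsym n k m H d (l + i * n) \<noteq> 0}
      = {\<tau>\<in>{i * n..<(i + j + 1) * n}. subsym n k m H d \<tau> \<noteq> 0}" (is "?L = ?R")
  proof (intro set_eqI iffI)
    show "\<tau> \<in> ?L" if "\<tau> \<in> ?R" for \<tau>
      using that by (intro image_eqI[of _ _ "\<tau> - i * n"]) (auto simp: algebra_simps)
    show "\<tau> \<in> ?R" if "\<tau> \<in> ?L" for \<tau>
      using that by (auto simp: add_mult_distrib)
  qed
  finally show ?thesis .
qed

lemma col_dist_le_col_weight:
  assumes "a < k" and "s 0 a \<noteq> 0"
  shows "col_dist n k m H j \<le> col_weight n k m H s j"
  unfolding col_dist_def using assms by (intro cInf_lower) auto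

lemma strongly_MDS_col_weight:
  assumes "strongly_MDS n k m H" and "j \<le> m" and "a < k" and "s 0 a \<noteq> 0"
  shows "(n - k) * (j + 1) < col_weight n k m H s j"
  using col_dist_le_col_weight[of a k s n m H j] assms
  unfolding strongly_MDS_def by fastforce

lemma block_vanishes:
  fixes H :: "nat \<Rightarrow> nat \<Rightarrow> nat \<Rightarrow> 'a::field"
  assumes MDS: "strongly_MDS n k m H" and "i \<le> j" and "j \<le> m" and "0 < n"
    and before: "\<forall>u<i. \<forall>a<k. d u a = 0"
    and received: "\<And>\<tau>. \<tau> \<in> {i * n..<(j + 1) * n} \<Longrightarrow> \<tau> \<notin> E \<Longrightarrow> subsym n k m H d \<tau> = 0"
    and few: "card (E \<inter> {i * n..<(j + 1) * n}) \<le> (n - k) * (j + 1 - i)"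
    and "a < k"
  shows "d i a = 0"
proof (rule ccontr)
  assume "d i a \<noteq> 0"
  then have "(n - k) * (j - i + 1) < col_weight n k m H (\<lambda>t a. d (t + i) a) (j - i)"
    using strongly_MDS_col_weight[OF MDS _ \<open>a < k\<close>, of "j - i"] \<open>j \<le> m\<close> by simp
  also have "\<dots> = card {\<tau>\<in>{i * n..<(j + 1) * n}. subsym n k m H d \<tau> \<noteq> 0}"
    using col_weight_shift[OF \<open>0 < n\<close> before] \<open>i \<le> j\<close> by simp
  also have "\<dots> \<le> card (E \<inter> {i * n..<(j + 1) * n})"
    using received by (intro card_mono) auto
  finally show False using few \<open>i \<le> j\<close> by (simp add: Suc_diff_le)
qed

lemma recoverable_mono:
  "recoverable n k m H E T Q \<Longrightarrow> Q' \<subseteq> Q \<Longrightarrow> recoverable n k m H E T Q'"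
  unfolding recoverable_def by blast

lemma recoverable_blocks_before:
  fixes H :: "nat \<Rightarrow> nat \<Rightarrow> nat \<Rightarrow> 'a::field"
  assumes MDS: "strongly_MDS n k m H" and "j \<le> m" and "0 < n" and "T \<le> (j + 1) * n"
    and few: "\<And>i. i * n < T \<Longrightarrow> card (E \<inter> {i * n..<(j + 1) * n}) \<le> (n - k) * (j + 1 - i)"
  shows "recoverable n k m H E ((j + 1) * n) {(i, a). i * n < T \<and> a < k}"
  unfolding recoverable_def
proof (intro allI impI)
  fix s s' :: "nat \<Rightarrow> nat \<Rightarrow> 'a"
  assume agree: "\<forall>\<tau><(j + 1) * n. \<tau> \<notin> E \<longrightarrow> subsym n k m H s \<tau> = subsym n k m H s' \<tau>"
  define d where "d i a = s i a - s' i a" for i a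
  have received: "subsym n k m H d \<tau> = 0" if "\<tau> < (j + 1) * n" "\<tau> \<notin> E" for \<tau>
    using agree that unfolding d_def subsym_diff by simp
  have "\<forall>a<k. d i a = 0" if "i * n < T" for i
    using that
  proof (induction i rule: less_induct)
    case (less i)
    have "\<forall>u<i. \<forall>a<k. d u a = 0"
      using less by (meson le_less_trans less_imp_le_nat mult_le_mono1)
    moreover have "i \<le> j"
      using less.prems \<open>T \<le> (j + 1) * n\<close> by (metis Suc_eq_plus1 less_Suc_eq_le
          less_le_trans mult_less_cancel2)
    ultimately show ?case
      using block_vanishes[OF MDS _ \<open>j \<le> m\<close> \<open>0 < n\<close> _ _ few[OF less.prems]] received
      by auto
  qed
  then show "\<forall>(i, a)\<in>{(i, a). i * n < T \<and> a < k}. s i a = s' i a"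
    unfolding d_def by auto
qed

lemma recoverable_first_block:
  fixes H :: "nat \<Rightarrow> nat \<Rightarrow> nat \<Rightarrow> 'a::field"
  assumes MDS: "strongly_MDS n k m H" and "j \<le> m" and "k \<le> n"
    and few: "card (E \<inter> {..<(j + 1) * n}) \<le> (n - k) * (j + 1)"
  shows "recoverable n k m H E ((j + 1) * n) ({0} \<times> {..<k})"
proof (cases "k = 0")
  case True
  then show ?thesis by (simp add: recoverable_def)
next
  case False
  with \<open>k \<le> n\<close> have "0 < n" by simp
  have "recoverable n k m H E ((j + 1) * n) {(i, a). i * n < 1 \<and> a < k}"
  proof (rule recoverable_blocks_before[OF MDS \<open>j \<le> m\<close> \<open>0 < n\<close>])
    show "1 \<le> (j + 1) * n" using \<open>0 < n\<close> by simp
    show "card (E \<inter> {i * n..<(j + 1) * n}) \<le> (n - k) * (j + 1 - i)" if "i * n < 1" for i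
    proof -
      have "i = 0" using that \<open>0 < n\<close> by simp
      then show ?thesis using few by (simp add: atLeast0LessThan)
    qed
  qed
  moreover have "{0} \<times> {..<k} \<subseteq> {(i, a). i * n < 1 \<and> a < k}" by auto
  ultimately show ?thesis by (rule recoverable_mono)
qed

lemma burst_window_card:
  fixes c B i j n k :: nat
  assumes "c < k" and "k \<le> n" and "B + N \<le> (n - k) * (j + 1)" and "i * n < c + B"
  shows "card ({c..<c + B} \<inter> {i * n..<(j + 1) * n}) + N \<le> (n - k) * (j + 1 - i)"
proof (cases "i = 0")
  case True
  have "card ({c..<c + B} \<inter> {i * n..<(j + 1) * n}) \<le> card {c..<c + B}"
    by (intro card_mono) auto
  then show ?thesis using True assms(3) by simp
next
  case False
  have "k \<le> i * k" using False by simp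
  have "i * n = i * k + i * (n - k)" using \<open>k \<le> n\<close> by (simp add: algebra_simps)
  have "i * (n - k) < (n - k) * (j + 1)"
    using assms \<open>k \<le> i * k\<close> \<open>i * n = i * k + i * (n - k)\<close> by linarith
  then have "i \<le> j + 1" by (metis less_imp_le_nat mult.commute mult_less_cancel1)
  then have "(n - k) * (j + 1 - i) + i * (n - k) = (n - k) * (j + 1)"
    by (metis add_mult_distrib2 le_add_diff_inverse2 mult.commute)
  moreover have "card ({c..<c + B} \<inter> {i * n..<(j + 1) * n}) \<le> card {i * n..<c + B}"
    by (intro card_mono) auto
  then have "card ({c..<c + B} \<inter> {i * n..<(j + 1) * n}) \<le> c + B - i * n"
    by simp
  ultimately show ?thesis
    using assms \<open>k \<le> i * k\<close> \<open>i * n = i * k + i * (n - k)\<close> by linarith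
qed

lemma recoverable_burst_and_erasures:
  fixes H :: "nat \<Rightarrow> nat \<Rightarrow> nat \<Rightarrow> 'a::field"
  assumes MDS: "strongly_MDS n k m H" and "j \<le> m" and "k \<le> n" and "c < k"
    and "B + card J \<le> (n - k) * (j + 1)" and "finite J"
  shows "recoverable n k m H ({c..<c + B} \<union> J) ((j + 1) * n) (erased_src n k {c..<c + B})"
proof (rule recoverable_mono)
  have "c + B \<le> k + (n - k) * (j + 1)" using assms by simp
  also have "\<dots> \<le> (j + 1) * n" using \<open>k \<le> n\<close>
    by (simp add: algebra_simps)
  finally have "c + B \<le> (j + 1) * n" .
  moreover have "card (({c..<c + B} \<union> J) \<inter> {i * n..<(j + 1) * n}) \<le> (n - k) * (j + 1 - i)"
    if "i * n < c + B" for i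
  proof -
    have "card (({c..<c + B} \<union> J) \<inter> {i * n..<(j + 1) * n})
        \<le> card (({c..<c + B} \<inter> {i * n..<(j + 1) * n}) \<union> J)"
      using \<open>finite J\<close> by (intro card_mono) auto
    also have "\<dots> \<le> card ({c..<c + B} \<inter> {i * n..<(j + 1) * n}) + card J"
      by (rule card_Un_le)
    also have "\<dots> \<le> (n - k) * (j + 1 - i)"
      using burst_window_card[OF \<open>c < k\<close> \<open>k \<le> n\<close> _ that] assms(5) by simp
    finally show ?thesis .
  qed
  ultimately show "recoverable n k m H ({c..<c + B} \<union> J) ((j + 1) * n)
      {(i, a). i * n < c + B \<and> a < k}"
    using recoverable_blocks_before[OF MDS \<open>j \<le> m\<close>] assms by simp
  show "erased_src n k {c..<c + B} \<subseteq> {(i, a). i * n < c + B \<and> a < k}"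
    unfolding erased_src_def
    by auto (metis div_times_less_eq_dividend le_less_trans)
qed

theorem lemma1:
  fixes H :: "nat \<Rightarrow> nat \<Rightarrow> nat \<Rightarrow> 'a::{field,finite}" and n k m :: nat
  assumes "k \<le> n" and "strongly_MDS n k m H"
  shows "\<forall>j\<le>m.
    (\<forall>E :: nat set. card (E \<inter> {..<(j + 1) * n}) \<le> (n - k) * (j + 1) \<longrightarrow>
        recoverable n k m H E ((j + 1) * n) ({0} \<times> {..<k}))
  \<and> (\<forall>c B. c < k \<and> B \<le> (n - k) * (j + 1) \<longrightarrow>
        recoverable n k m H {c..<c + B} ((j + 1) * n) (erased_src n k {c..<c + B}))
  \<and> (\<forall>c B I J. c < k \<and> B + I \<le> (n - k) * (j + 1) \<and> J \<subseteq> {c + B..} \<and> finite J \<and> card J \<le> I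
        \<and> isolated_in J ({c..<c + B} \<union> J) \<longrightarrow>
        recoverable n k m H ({c..<c + B} \<union> J) ((j + 1) * n) (erased_src n k {c..<c + B}))"
proof (intro allI impI conjI)
  fix j assume "j \<le> m"
  show "recoverable n k m H E ((j + 1) * n) ({0} \<times> {..<k})"
    if "card (E \<inter> {..<(j + 1) * n}) \<le> (n - k) * (j + 1)" for E
    using recoverable_first_block[OF assms(2) \<open>j \<le> m\<close> assms(1) that] .
  show "recoverable n k m H {c..<c + B} ((j + 1) * n) (erased_src n k {c..<c + B})"
    if "c < k \<and> B \<le> (n - k) * (j + 1)" for c B
    using recoverable_burst_and_erasures[OF assms(2) \<open>j \<le> m\<close> assms(1), of c B "{}"] that
    by simp
  show "recoverable n k m H ({c..<c + B} \<union> J) ((j + 1) * n) (erased_src n k {c..<c + B})"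
    if "c < k \<and> B + I \<le> (n - k) * (j + 1) \<and> J \<subseteq> {c + B..} \<and> finite J \<and> card J \<le> I
        \<and> isolated_in J ({c..<c + B} \<union> J)" for c B I J
    using recoverable_burst_and_erasures[OF assms(2) \<open>j \<le> m\<close> assms(1), of c B J] that
    by simp
qed

end
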